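(* Let $p\in(0,1)$, $\varepsilon>0$, and let $\mathcal{C}\subseteq\mathbb{F}_2^{m\times n}$ be a fixed $\mathbb{F}_2$-linear rank metric code with $T_{\mathcal{C}}<1$ (so $S_{\mathcal{C}}<2$). Then $$\Pr_{Y\sim\mathbb{F}_2^{m\times n}}\left[S_{\mathcal{C}+\{0,Y\}}>1+2T_{\mathcal{C}}+T_{\mathcal{C}}^{1.5}\right]<T_{\mathcal{C}}^{0.5},$$ where $Y$ is uniform.
   Context: $\mathcal{B}_R(X,pn)=\{Z\in\mathbb{F}_2^{m\times n}:\mathrm{rank}(X-Z)\le pn\}$; $L_{\mathcal{C}}(X)=|\mathcal{B}_R(X,pn)\cap\mathcal{C}|$; $A_{\mathcal{C}}(X)=2^{\frac{\varepsilon}{1+\varepsilon}nL_{\mathcal{C}}(X)}$; $S_{\mathcal{C}}=\mathbb{E}_{X\sim\mathbb{F}_2^{m\times n}}[A_{\mathcal{C}}(X)]$ ($X$ uniform); $T_{\mathcal{C}}=S_{\mathcal{C}}-1$. $\mathcal{C}+\{0,Y\}=\mathcal{C}\cup(\mathcal{C}+Y)$. *)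

theory Defs
  imports "HOL-Analysis.Analysis" "HOL-Library.Z2"
begin

instance bit :: finite
proof
  have "(UNIV :: bit set) = {0, 1}"
    using bit_not_zero_iff by blast
  then show "finite (UNIV :: bit set)" by (metis finite.emptyI finite.insertI)
qed

text \<open>m x n matrices over F_2: the type bit^'n^'m (m = CARD('m) rows, n = CARD('n) columns).
  rank is the library rank over a field.\<close>

definition f2_linear :: "(bit^'n^'m) set \<Rightarrow> bool" where
  "f2_linear C \<longleftrightarrow> 0 \<in> C \<and> (\<forall>a\<in>C. \<forall>b\<in>C. a + b \<in> C)
     \<and> (\<forall>c::bit. \<forall>a\<in>C. (\<chi> i j. c * a $ i $ j) \<in> C)"

definition rank_ball :: "real \<Rightarrow> bit^'n^'m \<Rightarrow> (bit^'n^'m) set" where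
  "rank_ball p X = {Z. real (rank (X - Z)) \<le> p * real CARD('n)}"

definition list_size :: "real \<Rightarrow> (bit^'n^'m) set \<Rightarrow> bit^'n^'m \<Rightarrow> nat" where
  "list_size p C X = card (rank_ball p X \<inter> C)"

definition A_fun :: "real \<Rightarrow> real \<Rightarrow> (bit^'n^'m) set \<Rightarrow> bit^'n^'m \<Rightarrow> real" where
  "A_fun p \<epsilon> C X = 2 powr (\<epsilon> / (1 + \<epsilon>) * real CARD('n) * real (list_size p C X))"

definition S_fun :: "real \<Rightarrow> real \<Rightarrow> (bit^'n^'m) set \<Rightarrow> real" where
  "S_fun p \<epsilon> C = (\<Sum>X\<in>UNIV. A_fun p \<epsilon> C X) / real CARD(bit^'n^'m)"

definition T_fun :: "real \<Rightarrow> real \<Rightarrow> (bit^'n^'m) set \<Rightarrow> real" where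
  "T_fun p \<epsilon> C = S_fun p \<epsilon> C - 1"

text \<open>C + {0,Y} = C \<union> (C + Y).\<close>
definition code_extend :: "(bit^'n^'m) set \<Rightarrow> bit^'n^'m \<Rightarrow> (bit^'n^'m) set" where
  "code_extend C Y = C \<union> (\<lambda>c. c + Y) ` C"

end

theory Submission
  imports Defs
begin

text \<open>Write \<open>A = A\<^sub>C\<close>, \<open>S = S\<^sub>C = 1 + T\<close> and \<open>L = L\<^sub>C\<close>. The code \<open>C + {0,Y}\<close> meets a rank ball
  around \<open>X\<close> in at most \<open>L(X) + L(X - Y)\<close> points, so its function \<open>A\<close> is at most
  \<open>A(X) A(X - Y)\<close> and its \<open>S\<close> is at most the autocorrelation \<open>G(Y) = E\<^sub>X[A(X) A(X - Y)]\<close>.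
  Averaged over \<open>Y\<close>, \<open>G\<close> equals \<open>S\<^sup>2 = 1 + 2T + T\<^sup>2\<close>, and pointwise \<open>G \<ge> 2S - 1 = 1 + 2T\<close>
  because \<open>A \<ge> 1\<close>. So \<open>G - (1 + 2T)\<close> is nonnegative with mean \<open>T\<^sup>2\<close>, and Markov's inequality
  at level \<open>T\<^sup>3\<^sup>/\<^sup>2\<close> bounds the probability by \<open>T\<^sup>1\<^sup>/\<^sup>2\<close>. Strictness needs \<open>T > 0\<close>, which holds
  because the zero codeword lies in the ball around \<open>0\<close>.\<close>

lemma sum_translate:
  fixes f :: "'a::{finite, ab_group_add} \<Rightarrow> 'b::comm_monoid_add"
  shows "(\<Sum>X\<in>UNIV. f (X - Y)) = (\<Sum>X\<in>UNIV. f X)"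
proof -
  have "bij_betw (\<lambda>X. X - Y) UNIV UNIV"
    by (rule bij_betwI[where g="\<lambda>X. X + Y"]) auto
  then show ?thesis by (rule sum.reindex_bij_betw)
qed

lemma sum_reflect_translate:
  fixes f :: "'a::{finite, ab_group_add} \<Rightarrow> 'b::comm_monoid_add"
  shows "(\<Sum>Y\<in>UNIV. f (X - Y)) = (\<Sum>Y\<in>UNIV. f Y)"
proof -
  have "bij_betw (\<lambda>Y. X - Y) UNIV UNIV"
    by (rule bij_betwI[where g="\<lambda>Z. X - Z"]) (auto simp: algebra_simps)
  then show ?thesis by (rule sum.reindex_bij_betw)
qed

definition autocorr :: "('a::{finite, ab_group_add} \<Rightarrow> real) \<Rightarrow> 'a \<Rightarrow> real" where
  "autocorr f Y = (\<Sum>X\<in>UNIV. f X * f (X - Y)) / real CARD('a)"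

lemma sum_autocorr:
  fixes f :: "'a::{finite, ab_group_add} \<Rightarrow> real"
  shows "(\<Sum>Y\<in>UNIV. autocorr f Y) = (\<Sum>X\<in>UNIV. f X)\<^sup>2 / real CARD('a)"
proof -
  have "(\<Sum>Y\<in>UNIV. \<Sum>X\<in>UNIV. f X * f (X - Y)) = (\<Sum>X\<in>UNIV. \<Sum>Y\<in>UNIV. f X * f (X - Y))"
    by (rule sum.swap)
  also have "\<dots> = (\<Sum>X\<in>UNIV. f X * (\<Sum>Z\<in>UNIV. f Z))"
    by (simp add: sum_distrib_left[symmetric] sum_reflect_translate)
  also have "\<dots> = (\<Sum>X\<in>UNIV. f X)\<^sup>2"
    by (simp add: sum_distrib_right[symmetric] power2_eq_square)
  finally show ?thesis
    unfolding autocorr_def by (simp add: sum_divide_distrib[symmetric])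
qed

lemma autocorr_lower_bound:
  fixes f :: "'a::{finite, ab_group_add} \<Rightarrow> real"
  assumes "\<And>X. 1 \<le> f X"
  shows "2 * (\<Sum>X\<in>UNIV. f X) / real CARD('a) - 1 \<le> autocorr f Y"
proof -
  have "(\<Sum>X\<in>UNIV. f X + f (X - Y) - 1) \<le> (\<Sum>X\<in>UNIV. f X * f (X - Y))"
  proof (rule sum_mono)
    fix X
    have "0 \<le> (f X - 1) * (f (X - Y) - 1)" using assms by simp
    then show "f X + f (X - Y) - 1 \<le> f X * f (X - Y)" by (simp add: algebra_simps)
  qed
  moreover have "(\<Sum>X\<in>UNIV. f X + f (X - Y) - 1) = 2 * (\<Sum>X\<in>UNIV. f X) - real CARD('a)"
    by (simp add: sum.distrib sum_subtractf sum_translate)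
  ultimately show ?thesis
    unfolding autocorr_def by (simp add: divide_simps)
qed

lemma card_superlevel_mult_less_sum:
  fixes f :: "'a \<Rightarrow> real"
  assumes "finite A" "\<And>x. x \<in> A \<Longrightarrow> 0 \<le> f x" "0 < t" "0 < sum f A"
  shows "real (card {x\<in>A. t < f x}) * t < sum f A"
proof (cases "{x\<in>A. t < f x} = {}")
  case True
  then show ?thesis using assms(4) by (simp only: card.empty of_nat_0 mult_zero_left)
next
  case False
  have "real (card {x\<in>A. t < f x}) * t = (\<Sum>x\<in>{x\<in>A. t < f x}. t)" by simp
  also have "\<dots> < (\<Sum>x\<in>{x\<in>A. t < f x}. f x)"
    using False assms(1) by (intro sum_strict_mono) auto
  also have "\<dots> \<le> sum f A"
    using assms(1,2) by (intro sum_mono2) auto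
  finally show ?thesis .
qed

lemma card_autocorr_excess_less:
  fixes f :: "'a::{finite, ab_group_add} \<Rightarrow> real"
  defines "S \<equiv> (\<Sum>X\<in>UNIV. f X) / real CARD('a)"
  assumes "\<And>X. 1 \<le> f X" "1 < S" "0 < t"
  shows "real (card {Y. 2 * S - 1 + t < autocorr f Y}) / real CARD('a) < (S - 1)\<^sup>2 / t"
proof -
  define N where "N = real CARD('a)"
  define W where "W Y = autocorr f Y - (2 * S - 1)" for Y
  have N_pos: "0 < N" unfolding N_def by simp
  have sum_f: "(\<Sum>X\<in>UNIV. f X) = N * S"
    using N_pos unfolding S_def N_def by simp
  have W_nonneg: "0 \<le> W Y" for Y
    using autocorr_lower_bound[of f Y] assms(2) unfolding W_def S_def by simp
  have "sum W UNIV = (N * S)\<^sup>2 / N - N * (2 * S - 1)"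
    unfolding W_def sum_subtractf sum_autocorr sum_f by (simp add: N_def algebra_simps)
  also have "\<dots> = N * (S - 1)\<^sup>2"
    using N_pos by (simp add: field_simps power2_eq_square)
  finally have sum_W: "sum W UNIV = N * (S - 1)\<^sup>2" .
  have "real (card {Y\<in>UNIV. t < W Y}) * t < N * (S - 1)\<^sup>2"
    using W_nonneg N_pos assms(3,4) unfolding sum_W[symmetric]
    by (intro card_superlevel_mult_less_sum) (auto simp: sum_W)
  then show ?thesis
    using N_pos assms(4) unfolding N_def W_def by (simp add: field_simps)
qed

lemma rank_zero: "rank (0::'a::field^'n^'m) = 0"
  unfolding row_rank_def_gen
proof -
  have "rows (0::'a^'n^'m) \<subseteq> {0}" by (auto simp: rows_def row_def vec_eq_iff)
  then show "vec.dim (rows (0::'a^'n^'m)) = 0" by simp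
qed

lemma list_size_code_extend_le:
  fixes C :: "(bit^'n^'m) set"
  shows "list_size p (code_extend C Y) X \<le> list_size p C X + list_size p C (X - Y)"
proof -
  have "card (rank_ball p X \<inter> code_extend C Y)
      \<le> card (rank_ball p X \<inter> C) + card (rank_ball p X \<inter> (\<lambda>c. c + Y) ` C)"
    unfolding code_extend_def Int_Un_distrib by (rule card_Un_le)
  moreover have "card (rank_ball p X \<inter> (\<lambda>c. c + Y) ` C) \<le> card (rank_ball p (X - Y) \<inter> C)"
  proof (rule card_inj_on_le[where f="\<lambda>Z. Z - Y"])
    show "inj_on (\<lambda>Z. Z - Y) (rank_ball p X \<inter> (\<lambda>c. c + Y) ` C)"
      by (auto simp: inj_on_def)
    show "(\<lambda>Z. Z - Y) ` (rank_ball p X \<inter> (\<lambda>c. c + Y) ` C) \<subseteq> rank_ball p (X - Y) \<inter> C"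
      by (auto simp: rank_ball_def algebra_simps)
  qed simp
  ultimately show ?thesis unfolding list_size_def by linarith
qed

lemma A_fun_ge_one:
  assumes "0 < \<epsilon>"
  shows "1 \<le> A_fun p \<epsilon> C X"
  unfolding A_fun_def using assms by (intro ge_one_powr_ge_zero) auto

lemma A_fun_code_extend_le:
  fixes C :: "(bit^'n^'m) set"
  assumes "0 < \<epsilon>"
  shows "A_fun p \<epsilon> (code_extend C Y) X \<le> A_fun p \<epsilon> C X * A_fun p \<epsilon> C (X - Y)"
proof -
  define k where "k = \<epsilon> / (1 + \<epsilon>) * real CARD('n)"
  have "0 \<le> k" using assms by (simp add: k_def)
  then have "k * real (list_size p (code_extend C Y) X)
      \<le> k * real (list_size p C X) + k * real (list_size p C (X - Y))"
    using list_size_code_extend_le[of p C Y X]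
    by (simp add: distrib_left[symmetric] mult_left_mono)
  then show ?thesis
    unfolding A_fun_def k_def[symmetric] by (simp add: powr_add[symmetric])
qed

lemma S_fun_code_extend_le_autocorr:
  fixes C :: "(bit^'n^'m) set"
  assumes "0 < \<epsilon>"
  shows "S_fun p \<epsilon> (code_extend C Y) \<le> autocorr (A_fun p \<epsilon> C) Y"
  unfolding S_fun_def autocorr_def
  by (intro divide_right_mono sum_mono A_fun_code_extend_le assms) simp

lemma T_fun_pos:
  fixes C :: "(bit^'n^'m) set"
  assumes "0 \<le> p" "0 < \<epsilon>" "f2_linear C"
  shows "0 < T_fun p \<epsilon> C"
proof -
  have "0 \<in> rank_ball p 0 \<inter> C"
    using assms(1,3) by (simp add: f2_linear_def rank_ball_def rank_zero)
  then have "0 < list_size p C 0"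
    unfolding list_size_def by (auto simp: card_gt_0_iff)
  then have "1 < A_fun p \<epsilon> C 0"
    using assms(2) unfolding A_fun_def by simp
  then have "(\<Sum>X\<in>(UNIV::(bit^'n^'m) set). 1) < (\<Sum>X\<in>UNIV. A_fun p \<epsilon> C X)"
    using A_fun_ge_one[OF assms(2), of p C] by (intro sum_strict_mono_ex1) auto
  then show ?thesis
    unfolding T_fun_def S_fun_def by (simp add: divide_simps)
qed

theorem lemma7:
  fixes p \<epsilon> :: real and C :: "(bit^'n^'m) set"
  assumes "0 < p" "p < 1" "0 < \<epsilon>"
    and "f2_linear C"
    and "T_fun p \<epsilon> C < 1"
  shows "real (card {Y :: bit^'n^'m. S_fun p \<epsilon> (code_extend C Y)
            > 1 + 2 * T_fun p \<epsilon> C + T_fun p \<epsilon> C powr 1.5})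
           / real CARD(bit^'n^'m)
         < T_fun p \<epsilon> C powr 0.5"
proof -
  define T where "T = T_fun p \<epsilon> C"
  define E where "E = {Y. S_fun p \<epsilon> (code_extend C Y) > 1 + 2 * T + T powr 1.5}"
  have T_pos: "0 < T" unfolding T_def using assms by (intro T_fun_pos) auto
  have S_eq: "S_fun p \<epsilon> C = 1 + T" unfolding T_def T_fun_def by simp
  have "E \<subseteq> {Y. 2 * S_fun p \<epsilon> C - 1 + T powr 1.5 < autocorr (A_fun p \<epsilon> C) Y}"
  proof
    fix Y assume "Y \<in> E"
    then show "Y \<in> {Y. 2 * S_fun p \<epsilon> C - 1 + T powr 1.5 < autocorr (A_fun p \<epsilon> C) Y}"
      using S_fun_code_extend_le_autocorr[OF assms(3), of p C Y] by (simp add: E_def S_eq)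
  qed
  then have "real (card E) / real CARD(bit^'n^'m)
      \<le> real (card {Y. 2 * S_fun p \<epsilon> C - 1 + T powr 1.5 < autocorr (A_fun p \<epsilon> C) Y})
        / real CARD(bit^'n^'m)"
    by (intro divide_right_mono of_nat_mono card_mono) auto
  also have "\<dots> < (S_fun p \<epsilon> C - 1)\<^sup>2 / T powr 1.5"
  proof (rule card_autocorr_excess_less[of "A_fun p \<epsilon> C", folded S_fun_def])
    show "1 \<le> A_fun p \<epsilon> C X" for X using assms(3) by (rule A_fun_ge_one)
    show "1 < S_fun p \<epsilon> C" "0 < T powr 1.5" using T_pos S_eq by simp_all
  qed
  also have "\<dots> = T powr 2 / T powr 1.5"
    using T_pos by (simp add: S_eq)
  also have "\<dots> = T powr 0.5"
    using powr_diff[of T 2 "1.5"] by simp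
  finally show ?thesis unfolding E_def T_def .
qed

end
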